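(* For $n\ge 2$, $$\sum_{v\in A_n}x^{\ell_{T(A_n)}(v)}=\sum_{k=0}^{n}a(n,k)\,x^k=\prod_{t=2}^{n-1}(1+tx).$$
   Context: $A_n$ is the alternating group on $\{1,\dots,n\}$, $T(A_n)=\{(1\,2)(i\,j)\mid 1\le i<j\le n\}$, $\ell_{T(A_n)}(v)=\min\{r\ge 0\mid v=t_1\cdots t_r,\ t_i\in T(A_n)\}$, and $a(n,k)$ is the number of $v\in A_n$ with $\ell_{T(A_n)}(v)=k$. An empty product equals $1$. *)

theory Defs
  imports "HOL-Combinatorics.Combinatorics"
begin

definition alt_grp :: "nat \<Rightarrow> (nat \<Rightarrow> nat) set" where
  "alt_grp n = {p. p permutes {1..n} \<and> evenperm p}"

definition T_alt :: "nat \<Rightarrow> (nat \<Rightarrow> nat) set" where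
  "T_alt n = {transpose 1 2 \<circ> transpose i j | i j. 1 \<le> i \<and> i < j \<and> j \<le> n}"

definition lenT :: "nat \<Rightarrow> (nat \<Rightarrow> nat) \<Rightarrow> nat" where
  "lenT n v = (LEAST r. \<exists>ts. length ts = r \<and> set ts \<subseteq> T_alt n \<and> v = foldr (\<circ>) ts id)"

definition a_cnt :: "nat \<Rightarrow> nat \<Rightarrow> nat" where
  "a_cnt n k = card {v \<in> alt_grp n. lenT n v = k}"

end

theory Submission
  imports Defs
begin

text \<open>
  Write \<open>c = (1 2)\<close> and let \<open>T\<close> be the set of transpositions of \<open>{1..n}\<close>, so that
  \<open>T(A\<^sub>n) = c \<cdot> T\<close>. Since \<open>c t c\<close> is again a transposition, moving every \<open>c\<close> to the right
  shows that \<open>v\<close> is a product of \<open>r\<close> elements of \<open>T(A\<^sub>n)\<close> iff \<open>v c\<^sup>r\<close> is a product of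
  \<open>r\<close> transpositions. The transposition length of a permutation is the number of swaps
  selection sort performs, and parity determines which of \<open>v\<close>, \<open>v c\<close> a word of a given
  length can represent; hence the \<open>T(A\<^sub>n)\<close>-length of an even \<open>v\<close> is the number of swaps
  selection sort performs on the points \<open>n, \<dots>, 3\<close> alone. Writing a permutation of
  \<open>{1..m}\<close> as \<open>(m b) \<circ> q\<close> with \<open>q\<close> fixing \<open>m\<close>, this statistic grows by one exactly when
  \<open>b \<noteq> m\<close>, and the parity of \<open>q\<close> is determined by that of \<open>(m b) \<circ> q\<close>; this gives the factor
  \<open>1 + (m - 1) x\<close> for either parity class.
\<close>

section \<open>Selection sort\<close>

text \<open>
  \<open>sort_steps k n w\<close> counts the swaps selection sort performs while putting the points
  \<open>n, n - 1, \<dots>, k + 1\<close> of \<open>w\<close> into place.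
\<close>

fun sort_steps :: "nat \<Rightarrow> nat \<Rightarrow> (nat \<Rightarrow> nat) \<Rightarrow> nat" where
  "sort_steps k 0 w = 0"
| "sort_steps k (Suc n) w =
     (if n < k then 0
      else if w (Suc n) = Suc n then sort_steps k n w
      else Suc (sort_steps k n (transpose (w (Suc n)) (Suc n) \<circ> w)))"

lemma sort_steps_le: "sort_steps k n w \<le> n"
  by (induction n arbitrary: w) (auto simp: le_SucI)

lemma sort_steps_id [simp]: "sort_steps k n id = 0"
  by (induction n) simp_all

lemma sort_steps_Suc_fixed:
  assumes "k \<le> n" and "w (Suc n) = Suc n"
  shows "sort_steps k (Suc n) w = sort_steps k n w"
  using assms by simp

lemma sort_steps_Suc_transpose_comp:
  assumes "k \<le> n" and "q (Suc n) = Suc n" and "b \<noteq> Suc n"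
  shows "sort_steps k (Suc n) (transpose (Suc n) b \<circ> q) = Suc (sort_steps k n q)"
proof -
  have "transpose b (Suc n) \<circ> (transpose (Suc n) b \<circ> q) = q"
    by (simp add: fun_eq_iff transpose_commute)
  with assms show ?thesis by simp
qed

declare sort_steps.simps(2) [simp del]

lemma permutes_atLeastAtMost_induct [consumes 1, case_names id transpose]:
  assumes "w permutes {1..n}"
    and "P 0 id"
    and "\<And>n b q. q permutes {1..n} \<Longrightarrow> b \<in> {1..Suc n} \<Longrightarrow> P n q \<Longrightarrow>
           P (Suc n) (transpose (Suc n) b \<circ> q)"
  shows "P n w"
  using assms(1)
proof (induction n arbitrary: w)
  case 0
  then have "w = id" by simp
  then show ?case using assms(2) by (simp only:)
next
  case (Suc n)
  have ins: "{1..Suc n} = insert (Suc n) {1..n}" by auto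
  define q where "q = transpose (Suc n) (w (Suc n)) \<circ> w"
  have q: "q permutes {1..n}"
    using permutes_insert_lemma[of w "Suc n" "{1..n}"] Suc.prems unfolding q_def ins by blast
  have "w (Suc n) \<in> {1..Suc n}" using Suc.prems permutes_in_image by fastforce
  moreover have "w = transpose (Suc n) (w (Suc n)) \<circ> q" by (simp add: q_def fun_eq_iff)
  ultimately show ?case using assms(3)[OF q _ Suc.IH[OF q]] by metis
qed

definition transpositions :: "'a set \<Rightarrow> ('a \<Rightarrow> 'a) set" where
  "transpositions A = {transpose a b | a b. a \<in> A \<and> b \<in> A \<and> a \<noteq> b}"

lemma transpositions_mono: "A \<subseteq> B \<Longrightarrow> transpositions A \<subseteq> transpositions B"
  unfolding transpositions_def by blast

fun word_products :: "('a \<Rightarrow> 'a) set \<Rightarrow> nat \<Rightarrow> ('a \<Rightarrow> 'a) set" where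
  "word_products S 0 = {id}"
| "word_products S (Suc r) = {g \<circ> f | g f. g \<in> S \<and> f \<in> word_products S r}"

lemma word_products_Suc_right:
  "word_products S (Suc r) = {f \<circ> g | f g. f \<in> word_products S r \<and> g \<in> S}"
proof (induction r)
  case 0
  show ?case by auto
next
  case (Suc r)
  show ?case
  proof (intro set_eqI iffI)
    fix h assume "h \<in> word_products S (Suc (Suc r))"
    then obtain g f where "h = g \<circ> f" "g \<in> S" "f \<in> word_products S (Suc r)"
      by auto
    moreover from this(3) obtain f' g' where "f = f' \<circ> g'" "f' \<in> word_products S r" "g' \<in> S"
      unfolding Suc by blast
    ultimately have "h = (g \<circ> f') \<circ> g'" "g \<circ> f' \<in> word_products S (Suc r)" "g' \<in> S"
      by (auto simp: comp_assoc)
    then show "h \<in> {f \<circ> g | f g. f \<in> word_products S (Suc r) \<and> g \<in> S}"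
      by blast
  next
    fix h assume "h \<in> {f \<circ> g | f g. f \<in> word_products S (Suc r) \<and> g \<in> S}"
    then obtain f g' where "h = f \<circ> g'" "f \<in> word_products S (Suc r)" "g' \<in> S"
      by blast
    moreover from this(2) obtain g f' where "f = g \<circ> f'" "g \<in> S" "f' \<in> word_products S r"
      by auto
    ultimately have "h = g \<circ> (f' \<circ> g')" "g \<in> S" "f' \<circ> g' \<in> word_products S (Suc r)"
      unfolding Suc by (auto simp: comp_assoc)
    then show "h \<in> word_products S (Suc (Suc r))"
      unfolding word_products.simps(2)[of S "Suc r"] by blast
  qed
qed

lemma word_products_mono: "S \<subseteq> S' \<Longrightarrow> word_products S r \<subseteq> word_products S' r"
proof (induction r)
  case (Suc r)
  then show ?case unfolding word_products.simps(2) by blast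
qed simp

lemma in_word_products_iff:
  "v \<in> word_products S r \<longleftrightarrow> (\<exists>ts. length ts = r \<and> set ts \<subseteq> S \<and> v = foldr (\<circ>) ts id)"
proof (induction r arbitrary: v)
  case (Suc r)
  show ?case
  proof
    assume "v \<in> word_products S (Suc r)"
    then obtain g f where "v = g \<circ> f" "g \<in> S" "f \<in> word_products S r" by auto
    moreover from this(3) obtain ts where "length ts = r" "set ts \<subseteq> S" "f = foldr (\<circ>) ts id"
      using Suc by blast
    ultimately have "length (g # ts) = Suc r \<and> set (g # ts) \<subseteq> S \<and> v = foldr (\<circ>) (g # ts) id"
      by simp
    then show "\<exists>ts. length ts = Suc r \<and> set ts \<subseteq> S \<and> v = foldr (\<circ>) ts id" ..
  next
    assume "\<exists>ts. length ts = Suc r \<and> set ts \<subseteq> S \<and> v = foldr (\<circ>) ts id"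
    then obtain g ts where "length ts = r" "g \<in> S" "set ts \<subseteq> S" "v = g \<circ> foldr (\<circ>) ts id"
      by (auto simp: length_Suc_conv)
    moreover from this(1,3) have "foldr (\<circ>) ts id \<in> word_products S r"
      using Suc by blast
    ultimately show "v \<in> word_products S (Suc r)" by auto
  qed
qed simp

lemma lenT_eq_Least: "lenT n v = (LEAST r. v \<in> word_products (T_alt n) r)"
  unfolding lenT_def in_word_products_iff ..

lemma permutes_word_products_transpositions:
  "w \<in> word_products (transpositions A) r \<Longrightarrow> w permutes A"
  by (induction r arbitrary: w)
    (auto simp: transpositions_def permutes_id intro!: permutes_compose permutes_swap_id)

lemma permutation_word_products_transpositions:
  "w \<in> word_products (transpositions A) r \<Longrightarrow> permutation w"
  by (induction r arbitrary: w)
    (auto simp: transpositions_def intro!: permutation_compose permutation_swap_id)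

lemma evenperm_word_products_transpositions:
  "w \<in> word_products (transpositions A) r \<Longrightarrow> evenperm w = even r"
proof (induction r arbitrary: w)
  case (Suc r)
  then obtain a b f where w: "w = transpose a b \<circ> f" "a \<noteq> b"
    and f: "f \<in> word_products (transpositions A) r"
    by (auto simp: transpositions_def)
  have "evenperm w = (evenperm (transpose a b) = evenperm f)"
    unfolding w(1) using permutation_swap_id permutation_word_products_transpositions[OF f]
    by (rule evenperm_comp)
  with w(2) Suc.IH[OF f] show ?case by (simp add: evenperm_swap)
qed simp

section \<open>Transposition length\<close>

lemma sort_steps_transpose_top_le:
  assumes q: "q permutes {1..n}" and b: "b \<in> {1..Suc n}" and a: "a \<in> {1..n}"
    and bound: "\<And>a c. a \<in> {1..n} \<Longrightarrow> c \<in> {1..n} \<Longrightarrow>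
      sort_steps 0 n (transpose a c \<circ> q) \<le> Suc (sort_steps 0 n q)"
  shows "sort_steps 0 (Suc n) (transpose a (Suc n) \<circ> (transpose (Suc n) b \<circ> q))
    \<le> Suc (sort_steps 0 (Suc n) (transpose (Suc n) b \<circ> q))"
proof -
  let ?m = "Suc n"
  have fixed: "sort_steps 0 ?m q' = sort_steps 0 n q'"
    and moved: "b' \<noteq> ?m \<Longrightarrow> sort_steps 0 ?m (transpose ?m b' \<circ> q') = Suc (sort_steps 0 n q')"
    if "q' permutes {1..n}" for b' q'
    using that by (simp_all add: sort_steps_Suc_fixed sort_steps_Suc_transpose_comp permutes_not_in)
  consider "b = ?m" | "b = a" | "b \<in> {1..n}" "b \<noteq> a"
    using b by fastforce
  then show ?thesis
  proof cases
    case 1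
    then show ?thesis
      using a fixed[OF q] moved[OF q, of a] by (simp add: transpose_commute)
  next
    case 2
    then show ?thesis
      using a fixed[OF q] moved[OF q, of a] by (simp add: o_assoc transpose_commute)
  next
    case 3
    have swap: "transpose a ?m \<circ> transpose ?m b = transpose ?m b \<circ> transpose a b"
      using 3 a by (auto simp: fun_eq_iff transpose_def)
    have ab: "transpose a b \<circ> q permutes {1..n}"
      using 3 a q by (simp add: permutes_compose permutes_swap_id)
    have "sort_steps 0 ?m (transpose a ?m \<circ> (transpose ?m b \<circ> q))
        = sort_steps 0 ?m (transpose ?m b \<circ> (transpose a b \<circ> q))"
      by (metis comp_assoc swap)
    also have "\<dots> = Suc (sort_steps 0 n (transpose a b \<circ> q))"
      by (rule moved[OF ab]) (use 3 in simp)
    also have "\<dots> \<le> Suc (Suc (sort_steps 0 n q))"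
      using bound[OF a 3(1)] by simp
    finally show ?thesis using 3 moved[OF q, of b] by simp
  qed
qed

lemma sort_steps_transpose_below_le:
  assumes q: "q permutes {1..n}" and ac: "a \<in> {1..n}" "c \<in> {1..n}"
    and bound: "sort_steps 0 n (transpose a c \<circ> q) \<le> Suc (sort_steps 0 n q)"
  shows "sort_steps 0 (Suc n) (transpose a c \<circ> (transpose (Suc n) b \<circ> q))
    \<le> Suc (sort_steps 0 (Suc n) (transpose (Suc n) b \<circ> q))"
proof -
  let ?m = "Suc n"
  have acq: "transpose a c \<circ> q permutes {1..n}"
    using ac q by (simp add: permutes_compose permutes_swap_id)
  have "transpose a c ?m = ?m" using ac by simp
  then have conj: "transpose a c \<circ> (transpose ?m b \<circ> q)
      = transpose ?m (transpose a c b) \<circ> (transpose a c \<circ> q)"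
    and moved_iff: "transpose a c b = ?m \<longleftrightarrow> b = ?m"
    by (auto simp: fun_eq_iff transpose_def)
  show ?thesis
  proof (cases "b = ?m")
    case True
    then show ?thesis
      unfolding conj using moved_iff bound q acq ac
      by (simp add: sort_steps_Suc_fixed permutes_not_in)
  next
    case False
    then show ?thesis
      unfolding conj using moved_iff bound q acq ac
      by (simp add: sort_steps_Suc_transpose_comp permutes_not_in)
  qed
qed

lemma sort_steps_transpose_comp_le:
  assumes "w permutes {1..n}" and "a \<in> {1..n}" and "c \<in> {1..n}"
  shows "sort_steps 0 n (transpose a c \<circ> w) \<le> Suc (sort_steps 0 n w)"
  using assms
proof (induction arbitrary: a c rule: permutes_atLeastAtMost_induct)
  case id
  then show ?case by simp
next
  case (transpose n b q)
  have IH: "sort_steps 0 n (transpose a c \<circ> q) \<le> Suc (sort_steps 0 n q)"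
    if "a \<in> {1..n}" "c \<in> {1..n}" for a c
    using transpose.IH[OF that] by (simp add: comp_def)
  consider "a = c" | "a = Suc n" "c \<in> {1..n}" | "c = Suc n" "a \<in> {1..n}"
    | "a \<in> {1..n}" "c \<in> {1..n}"
    using transpose.prems by fastforce
  then have "sort_steps 0 (Suc n) (transpose a c \<circ> (transpose (Suc n) b \<circ> q))
      \<le> Suc (sort_steps 0 (Suc n) (transpose (Suc n) b \<circ> q))"
  proof cases
    case 1
    then show ?thesis by simp
  next
    case 2
    then show ?thesis
      using sort_steps_transpose_top_le[OF transpose.hyps(1,2) _ IH] by (simp add: transpose_commute)
  next
    case 3
    then show ?thesis
      using sort_steps_transpose_top_le[OF transpose.hyps(1,2) _ IH] by simp
  next
    case 4
    then show ?thesis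
      using sort_steps_transpose_below_le[OF transpose.hyps(1) 4 IH[OF 4]] by simp
  qed
  then show ?case by (simp add: comp_def)
qed

lemma sort_steps_le_of_word_products:
  "w \<in> word_products (transpositions {1..n}) r \<Longrightarrow> sort_steps 0 n w \<le> r"
proof (induction r arbitrary: w)
  case (Suc r)
  then obtain a b f where "w = transpose a b \<circ> f" "a \<in> {1..n}" "b \<in> {1..n}"
    and f: "f \<in> word_products (transpositions {1..n}) r"
    by (auto simp: transpositions_def)
  then have "sort_steps 0 n w \<le> Suc (sort_steps 0 n f)"
    using sort_steps_transpose_comp_le permutes_word_products_transpositions by blast
  with Suc.IH[OF f] show ?case by simp
qed simp

lemma in_word_products_sort_steps:
  "w permutes {1..n} \<Longrightarrow> w \<in> word_products (transpositions {1..n}) (sort_steps 0 n w)"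
proof (induction rule: permutes_atLeastAtMost_induct)
  case id
  show ?case by (simp add: id_def)
next
  case (transpose n b q)
  let ?W = "word_products (transpositions {1..Suc n})"
  have q: "q \<in> ?W (sort_steps 0 n q)"
    using transpose.IH word_products_mono[OF transpositions_mono[of "{1..n}" "{1..Suc n}"]]
    by auto
  have "transpose (Suc n) b \<circ> q \<in> ?W (sort_steps 0 (Suc n) (transpose (Suc n) b \<circ> q))"
  proof (cases "b = Suc n")
    case True
    then show ?thesis
      using q transpose.hyps(1) by (simp add: sort_steps_Suc_fixed permutes_not_in)
  next
    case False
    then have "transpose (Suc n) b \<in> transpositions {1..Suc n}"
      using transpose.hyps(2) unfolding transpositions_def by auto
    with q False show ?thesis
      using transpose.hyps(1) by (auto simp: sort_steps_Suc_transpose_comp permutes_not_in)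
  qed
  then show ?case by (simp add: comp_def)
qed

section \<open>Words in \<open>T(A\<^sub>n)\<close>\<close>

lemma conj_involution_transpositions:
  assumes "c permutes A" and "c \<circ> c = id" and "t \<in> transpositions A"
  shows "c \<circ> t \<circ> c \<in> transpositions A"
proof -
  obtain a b where t: "t = transpose a b" "a \<in> A" "b \<in> A" "a \<noteq> b"
    using assms(3) by (auto simp: transpositions_def)
  have inv: "c (c x) = x" for x using assms(2) by (simp add: fun_eq_iff)
  have "c \<circ> t \<circ> c = transpose (c a) (c b)"
    using inv unfolding t(1) by (auto simp: fun_eq_iff transpose_def)
  moreover have "c a \<in> A" "c b \<in> A" "c a \<noteq> c b"
    using t(2-4) assms(1) inv by (auto simp: permutes_in_image) (metis)
  ultimately show ?thesis by (auto simp: transpositions_def)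
qed

lemma word_products_twisted_imp:
  assumes "c permutes A" and "c \<circ> c = id"
    and "v \<in> word_products ((\<circ>) c ` transpositions A) r"
  shows "(if even r then v else v \<circ> c) \<in> word_products (transpositions A) r"
  using assms(3)
proof (induction r arbitrary: v)
  case (Suc r)
  then obtain f t where v: "v = f \<circ> (c \<circ> t)" and f: "f \<in> word_products ((\<circ>) c ` transpositions A) r"
    and t: "t \<in> transpositions A"
    unfolding word_products_Suc_right by auto
  have cx: "c (c x) = x" for x
    using assms(2) by (simp add: fun_eq_iff)
  define t' where "t' = (if even r then c \<circ> t \<circ> c else t)"
  have "t' \<in> transpositions A"
    unfolding t'_def using conj_involution_transpositions[OF assms(1,2) t] t by simp
  moreover have "(if even (Suc r) then v else v \<circ> c) = (if even r then f else f \<circ> c) \<circ> t'"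
    unfolding v t'_def by (simp add: fun_eq_iff cx)
  moreover note Suc.IH[OF f]
  ultimately show ?case
    unfolding word_products_Suc_right mem_Collect_eq
    by (intro exI[of _ "if even r then f else f \<circ> c"] exI[of _ t'] conjI)
qed simp

lemma word_products_imp_twisted:
  assumes "c permutes A" and "c \<circ> c = id"
    and "w \<in> word_products (transpositions A) r"
  shows "(if even r then w else w \<circ> c) \<in> word_products ((\<circ>) c ` transpositions A) r"
  using assms(3)
proof (induction r arbitrary: w)
  case (Suc r)
  then obtain h t where w: "w = h \<circ> t" and h: "h \<in> word_products (transpositions A) r"
    and t: "t \<in> transpositions A"
    unfolding word_products_Suc_right by auto
  have cx: "c (c x) = x" for x
    using assms(2) by (simp add: fun_eq_iff)
  define t' where "t' = (if even r then c \<circ> t \<circ> c else t)"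
  have "c \<circ> t' \<in> (\<circ>) c ` transpositions A"
    unfolding t'_def using conj_involution_transpositions[OF assms(1,2) t] t by simp
  moreover have "(if even (Suc r) then w else w \<circ> c) = (if even r then h else h \<circ> c) \<circ> (c \<circ> t')"
    unfolding w t'_def by (simp add: fun_eq_iff cx)
  moreover note Suc.IH[OF h]
  ultimately show ?case
    unfolding word_products_Suc_right mem_Collect_eq
    by (intro exI[of _ "if even r then h else h \<circ> c"] exI[of _ "c \<circ> t'"] conjI)
qed simp

lemma word_products_twisted_transpositions:
  assumes "c permutes A" and "c \<circ> c = id"
  shows "v \<in> word_products ((\<circ>) c ` transpositions A) r \<longleftrightarrow>
    (if even r then v else v \<circ> c) \<in> word_products (transpositions A) r"
proof
  assume "(if even r then v else v \<circ> c) \<in> word_products (transpositions A) r"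
  from word_products_imp_twisted[OF assms this] show "v \<in> word_products ((\<circ>) c ` transpositions A) r"
    using assms(2) by (simp add: comp_assoc split: if_splits)
qed (rule word_products_twisted_imp[OF assms])

lemma T_alt_eq_twisted_transpositions:
  "T_alt n = (\<circ>) (transpose 1 2) ` transpositions {1..n}"
proof
  show "T_alt n \<subseteq> (\<circ>) (transpose 1 2) ` transpositions {1..n}"
  proof
    fix g assume "g \<in> T_alt n"
    then obtain i j where g: "g = transpose 1 2 \<circ> transpose i j" and "1 \<le> i" "i < j" "j \<le> n"
      unfolding T_alt_def by blast
    have "transpose i j \<in> transpositions {1..n}"
      unfolding transpositions_def mem_Collect_eq
      by (intro exI[of _ i] exI[of _ j]) (use \<open>1 \<le> i\<close> \<open>i < j\<close> \<open>j \<le> n\<close> in auto)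
    then show "g \<in> (\<circ>) (transpose 1 2) ` transpositions {1..n}"
      unfolding g by (rule imageI)
  qed
next
  have ordered: "\<exists>i j. transpose a b = transpose i j \<and> 1 \<le> i \<and> i < j \<and> j \<le> n"
    if "a \<in> {1..n}" "b \<in> {1..n}" "a \<noteq> b" for a b
  proof (cases "a < b")
    case False
    with that have "b < a" by simp
    with that show ?thesis
      by (intro exI[of _ b] exI[of _ a]) (simp add: transpose_commute)
  qed (use that in auto)
  show "(\<circ>) (transpose 1 2) ` transpositions {1..n} \<subseteq> T_alt n"
  proof
    fix g assume "g \<in> (\<circ>) (transpose 1 2) ` transpositions {1..n}"
    then obtain a b where g: "g = transpose 1 2 \<circ> transpose a b" and "a \<in> {1..n}" "b \<in> {1..n}" "a \<noteq> b"
      unfolding transpositions_def by auto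
    with ordered obtain i j where "transpose a b = transpose i j" "1 \<le> i" "i < j" "j \<le> n"
      by blast
    with g show "g \<in> T_alt n" unfolding T_alt_def by auto
  qed
qed

text \<open>
  Selection sort treats \<open>w\<close> and \<open>w \<circ> (1 2)\<close> alike on the points \<open>n, \<dots>, 3\<close> and is left
  with \<open>id\<close> on \<open>{1, 2}\<close> for one of them and with \<open>(1 2)\<close> for the other.
\<close>

lemma sort_steps_comp_transpose_12:
  assumes "w permutes {1..n}" and "2 \<le> n"
  shows "{sort_steps 0 n w, sort_steps 0 n (w \<circ> transpose 1 2)} =
    {sort_steps 2 n w, Suc (sort_steps 2 n w)}"
  using assms
proof (induction rule: permutes_atLeastAtMost_induct)
  case id
  then show ?case by simp
next
  case (transpose n b q)
  let ?m = "Suc n"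
  show ?case
  proof (cases "n < 2")
    case True
    with transpose.prems have n: "n = 1" by simp
    with transpose.hyps have "q = id" "b = 1 \<or> b = 2" by auto
    then show ?thesis
      unfolding n by (auto simp: sort_steps.simps numeral_2_eq_2 transpose_commute)
  next
    case False
    have fixed: "q (Suc n) = Suc n" "(q \<circ> transpose 1 2) (Suc n) = Suc n"
      using False transpose.hyps(1) by (simp_all add: permutes_not_in)
    have IH: "{sort_steps 0 n q, sort_steps 0 n (q \<circ> transpose 1 2)} =
        {sort_steps 2 n q, Suc (sort_steps 2 n q)}"
      using False transpose.IH by (simp add: comp_def)
    have "{sort_steps 0 ?m (transpose ?m b \<circ> q), sort_steps 0 ?m (transpose ?m b \<circ> (q \<circ> transpose 1 2))} =
        {sort_steps 2 ?m (transpose ?m b \<circ> q), Suc (sort_steps 2 ?m (transpose ?m b \<circ> q))}"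
    proof (cases "b = ?m")
      case True
      then show ?thesis
        using IH \<open>\<not> n < 2\<close> fixed by (simp add: sort_steps_Suc_fixed)
    next
      case False
      then show ?thesis
        using arg_cong[OF IH, of "image Suc"] \<open>\<not> n < 2\<close> fixed
        by (simp add: sort_steps_Suc_transpose_comp)
    qed
    then show ?thesis by (simp add: comp_def)
  qed
qed

lemma lenT_eq_sort_steps:
  assumes "2 \<le> n" and "v \<in> alt_grp n"
  shows "lenT n v = sort_steps 2 n v"
proof -
  let ?c = "transpose (1::nat) 2"
  let ?W = "word_products (transpositions {1..n})"
  have v: "v permutes {1..n}" "evenperm v" using assms(2) by (auto simp: alt_grp_def)
  have c: "?c permutes {1..n}" "?c \<circ> ?c = id"
    using assms(1) by (auto intro: permutes_swap_id)
  have "permutation v" using v(1) by (auto simp: permutation_permutes)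
  then have vc: "v \<circ> ?c permutes {1..n}" "\<not> evenperm (v \<circ> ?c)"
    using v c(1) by (simp_all add: permutes_compose evenperm_comp permutation_swap_id evenperm_swap)
  have twisted: "v \<in> word_products (T_alt n) r \<longleftrightarrow> (if even r then v else v \<circ> ?c) \<in> ?W r" for r
    unfolding T_alt_eq_twisted_transpositions by (rule word_products_twisted_transpositions[OF c])
  have lengths: "{sort_steps 0 n v, sort_steps 0 n (v \<circ> ?c)} = {sort_steps 2 n v, Suc (sort_steps 2 n v)}"
    by (rule sort_steps_comp_transpose_12[OF v(1) assms(1)])
  have "v \<in> ?W (sort_steps 0 n v)" "v \<circ> ?c \<in> ?W (sort_steps 0 n (v \<circ> ?c))"
    using in_word_products_sort_steps v(1) vc(1) by blast+
  moreover from this have "even (sort_steps 0 n v)" "odd (sort_steps 0 n (v \<circ> ?c))"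
    using v(2) vc(2) evenperm_word_products_transpositions by blast+
  ultimately have upper: "v \<in> word_products (T_alt n) (sort_steps 2 n v)"
    using lengths unfolding doubleton_eq_iff twisted by auto
  have lower: "sort_steps 2 n v \<le> r" if "v \<in> word_products (T_alt n) r" for r
  proof -
    have "sort_steps 0 n (if even r then v else v \<circ> ?c) \<le> r"
      using that twisted sort_steps_le_of_word_products by blast
    moreover have "sort_steps 2 n v \<le> sort_steps 0 n v" "sort_steps 2 n v \<le> sort_steps 0 n (v \<circ> ?c)"
      using lengths by (auto simp: doubleton_eq_iff)
    ultimately show ?thesis by (auto split: if_splits)
  qed
  show ?thesis
    unfolding lenT_eq_Least using upper lower by (rule Least_equality)
qed

lemma sum_power_eq_sum_card_fibres:
  fixes x :: "'a :: comm_semiring_1"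
  assumes "finite A" and "f ` A \<subseteq> {0..n}"
  shows "(\<Sum>v\<in>A. x ^ f v) = (\<Sum>k=0..n. of_nat (card {v \<in> A. f v = k}) * x ^ k)"
proof -
  have "(\<Sum>v\<in>A. x ^ f v) = (\<Sum>k=0..n. \<Sum>v | v \<in> A \<and> f v = k. x ^ f v)"
    using sum.group[OF assms(1) _ assms(2), of "\<lambda>v. x ^ f v"] by simp
  also have "\<dots> = (\<Sum>k=0..n. of_nat (card {v \<in> A. f v = k}) * x ^ k)"
    by (intro sum.cong) simp_all
  finally show ?thesis .
qed

lemma sum_parity_sort_steps_transpose_comp:
  fixes x :: "'a :: comm_ring_1"
  assumes "2 \<le> n"
  shows "(\<Sum>q | q permutes {1..n}. if evenperm (transpose (Suc n) b \<circ> q) = e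
      then x ^ sort_steps 2 (Suc n) (transpose (Suc n) b \<circ> q) else 0)
    = (if b = Suc n then 1 else x) *
      (\<Sum>q | q permutes {1..n}. if evenperm q = ((b = Suc n) = e) then x ^ sort_steps 2 n q else 0)"
  unfolding sum_distrib_left
proof (rule sum.cong)
  fix q assume "q \<in> {q. q permutes {1..n}}"
  then have q: "q permutes {1..n}" by simp
  then have "permutation q" by (auto simp: permutation_permutes)
  then have "evenperm (transpose (Suc n) b \<circ> q) = ((b = Suc n) = evenperm q)"
    by (simp add: evenperm_comp permutation_swap_id evenperm_swap eq_commute)
  moreover have "sort_steps 2 (Suc n) (transpose (Suc n) b \<circ> q) =
      (if b = Suc n then sort_steps 2 n q else Suc (sort_steps 2 n q))"
    using assms q by (simp add: sort_steps_Suc_fixed sort_steps_Suc_transpose_comp permutes_not_in)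
  ultimately show "(if evenperm (transpose (Suc n) b \<circ> q) = e
      then x ^ sort_steps 2 (Suc n) (transpose (Suc n) b \<circ> q) else 0)
    = (if b = Suc n then 1 else x) *
      (if evenperm q = ((b = Suc n) = e) then x ^ sort_steps 2 n q else 0)"
    by auto
qed simp

lemma sum_permutations_parity_sort_steps:
  fixes x :: "'a :: comm_ring_1"
  assumes "2 \<le> n"
  shows "(\<Sum>p | p permutes {1..n}. if evenperm p = e then x ^ sort_steps 2 n p else 0) =
    (\<Prod>t=2..n-1. 1 + of_nat t * x)"
  using assms
proof (induction n arbitrary: e rule: nat_induct_at_least)
  case base
  have "{1..2::nat} = insert 2 {1}" by auto
  then have "(\<Sum>p | p permutes {1..2::nat}. if evenperm p = e then x ^ sort_steps 2 2 p else 0)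
      = (if evenperm (id :: nat \<Rightarrow> nat) = e then 1 else 0)
        + (if evenperm (transpose (2::nat) 1) = e then 1 else 0)"
    by (simp add: sum_over_permutations_insert sort_steps.simps numeral_2_eq_2)
  also have "\<dots> = 1" by (cases e) (simp_all add: evenperm_swap)
  finally show ?case by simp
next
  case (Suc n)
  define P where "P = (\<Prod>t=2..n-1. 1 + of_nat t * x)"
  have "{1..Suc n} = insert (Suc n) {1..n}" by auto
  then have "(\<Sum>p | p permutes {1..Suc n}. if evenperm p = e then x ^ sort_steps 2 (Suc n) p else 0)
      = (\<Sum>b\<in>insert (Suc n) {1..n}. \<Sum>q | q permutes {1..n}. if evenperm (transpose (Suc n) b \<circ> q) = e
          then x ^ sort_steps 2 (Suc n) (transpose (Suc n) b \<circ> q) else 0)"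
    by (simp only:) (rule sum_over_permutations_insert, auto)
  also have "\<dots> = (\<Sum>b\<in>insert (Suc n) {1..n}. (if b = Suc n then 1 else x) * P)"
    unfolding sum_parity_sort_steps_transpose_comp[OF Suc.hyps] Suc.IH P_def ..
  also have "\<dots> = (1 + of_nat n * x) * P"
    by (simp add: sum.insert algebra_simps)
  also have "\<dots> = (\<Prod>t=2..Suc n-1. 1 + of_nat t * x)"
  proof -
    obtain k where "n = Suc k" using Suc.hyps by (cases n) auto
    with Suc.hyps show ?thesis by (simp add: P_def mult.commute)
  qed
  finally show ?case .
qed

theorem theorem7p2:
  fixes x :: "'a :: comm_ring_1" and n :: nat
  assumes "n \<ge> 2"
  shows "(\<Sum>v\<in>alt_grp n. x ^ lenT n v) = (\<Sum>k=0..n. of_nat (a_cnt n k) * x ^ k)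
    \<and> (\<Sum>k=0..n. of_nat (a_cnt n k) * x ^ k) = (\<Prod>t=2..n-1. 1 + of_nat t * x)"
proof
  have alt: "alt_grp n = {p \<in> {p. p permutes {1..n}}. evenperm p}"
    unfolding alt_grp_def by auto
  have fin: "finite {p. p permutes {1..n}}" by (simp add: finite_permutations)
  have lenT: "lenT n v = sort_steps 2 n v" if "v \<in> alt_grp n" for v
    using lenT_eq_sort_steps[OF assms that] .
  show fibres: "(\<Sum>v\<in>alt_grp n. x ^ lenT n v) = (\<Sum>k=0..n. of_nat (a_cnt n k) * x ^ k)"
    unfolding a_cnt_def using fin alt lenT sort_steps_le
    by (intro sum_power_eq_sum_card_fibres) auto
  have "(\<Sum>v\<in>alt_grp n. x ^ lenT n v) = (\<Sum>v\<in>alt_grp n. x ^ sort_steps 2 n v)"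
    using lenT by simp
  also have "\<dots> = (\<Sum>p | p permutes {1..n}. if evenperm p = True then x ^ sort_steps 2 n p else 0)"
    unfolding alt sum.inter_filter[OF fin] by simp
  also have "\<dots> = (\<Prod>t=2..n-1. 1 + of_nat t * x)"
    using assms by (rule sum_permutations_parity_sort_steps)
  finally show "(\<Sum>k=0..n. of_nat (a_cnt n k) * x ^ k) = (\<Prod>t=2..n-1. 1 + of_nat t * x)"
    using fibres by simp
qed

end
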